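(* Let $L$ be a geometric lattice of rank $r+1$ with atoms linearly ordered. If $(b_1,\dots,b_i,b_{i+1},\dots,b_{r+1})$ is the minimal labeling of a facet of $\Delta(L)$ and $b_i<b_{i+1}$, then $(b_1,\dots,b_{i+1},b_i,\dots,b_{r+1})$ (the sequence with $b_i$ and $b_{i+1}$ interchanged) is also the minimal labeling of a facet of $\Delta(L)$.
   Context: A geometric lattice is a finite graded atomic lattice whose rank function $\rho$ satisfies $\rho(x\vee y)+\rho(x\wedge y)\le \rho(x)+\rho(y)$. Facets of the order complex $\Delta(L)$ correspond to maximal chains $\hat 0=x_0<x_1<\dots<x_{r+1}=\hat 1$ of $L$. Fix a linear order on the atoms. For a cover $x\lessdot y$, let $\lambda(x,y)$ be the least atom $a$ with $x\vee a=y$; the minimal labeling of the facet is $(\lambda(x_0,x_1),\dots,\lambda(x_r,x_{r+1}))$. A sequence of atoms is "the minimal labeling of a facet" if it equals the minimal labeling of some maximal chain. *)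

theory Defs
  imports Main
begin

definition covers :: "'a::order \<Rightarrow> 'a \<Rightarrow> bool" where
  "covers x y \<longleftrightarrow> x < y \<and> \<not> (\<exists>z. x < z \<and> z < y)"

definition atom :: "'a::bounded_lattice \<Rightarrow> bool" where
  "atom a \<longleftrightarrow> covers bot a"

definition is_join_of :: "'a::order set \<Rightarrow> 'a \<Rightarrow> bool" where
  "is_join_of S x \<longleftrightarrow> (\<forall>a\<in>S. a \<le> x) \<and> (\<forall>z. (\<forall>a\<in>S. a \<le> z) \<longrightarrow> x \<le> z)"

definition atomic_lattice :: "'a::bounded_lattice itself \<Rightarrow> bool" where
  "atomic_lattice _ \<longleftrightarrow> (\<forall>x::'a. \<exists>S. S \<subseteq> {a. atom a} \<and> is_join_of S x)"

definition rank_function :: "('a::bounded_lattice \<Rightarrow> nat) \<Rightarrow> bool" where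
  "rank_function \<rho> \<longleftrightarrow> \<rho> bot = 0 \<and> (\<forall>x y. covers x y \<longrightarrow> \<rho> y = Suc (\<rho> x))"

definition geometric_lattice :: "'a::{finite,bounded_lattice} itself \<Rightarrow> bool" where
  "geometric_lattice T \<longleftrightarrow> atomic_lattice T \<and>
     (\<exists>\<rho>::'a \<Rightarrow> nat. rank_function \<rho> \<and>
        (\<forall>x y. \<rho> (sup x y) + \<rho> (inf x y) \<le> \<rho> x + \<rho> y))"

definition linear_order_on_atoms :: "('a::bounded_lattice \<Rightarrow> 'a \<Rightarrow> bool) \<Rightarrow> bool" where
  "linear_order_on_atoms lt \<longleftrightarrow>
     (\<forall>a. atom a \<longrightarrow> \<not> lt a a) \<and>
     (\<forall>a b c. atom a \<and> atom b \<and> atom c \<and> lt a b \<and> lt b c \<longrightarrow> lt a c) \<and>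
     (\<forall>a b. atom a \<and> atom b \<and> a \<noteq> b \<longrightarrow> lt a b \<or> lt b a)"

definition maximal_chain :: "'a::bounded_lattice list \<Rightarrow> bool" where
  "maximal_chain xs \<longleftrightarrow> xs \<noteq> [] \<and> hd xs = bot \<and> last xs = top \<and>
     (\<forall>j. Suc j < length xs \<longrightarrow> covers (xs ! j) (xs ! Suc j))"

definition min_label :: "('a::bounded_lattice \<Rightarrow> 'a \<Rightarrow> bool) \<Rightarrow> 'a \<Rightarrow> 'a \<Rightarrow> 'a" where
  "min_label lt x y = (THE a. atom a \<and> sup x a = y \<and>
      (\<forall>b. atom b \<and> sup x b = y \<and> b \<noteq> a \<longrightarrow> lt a b))"

definition min_labeling :: "('a::bounded_lattice \<Rightarrow> 'a \<Rightarrow> bool) \<Rightarrow> 'a list \<Rightarrow> 'a list" where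
  "min_labeling lt xs = map (\<lambda>j. min_label lt (xs ! j) (xs ! Suc j)) [0..<length xs - 1]"

definition is_min_labeling_of_facet :: "('a::bounded_lattice \<Rightarrow> 'a \<Rightarrow> bool) \<Rightarrow> 'a list \<Rightarrow> bool" where
  "is_min_labeling_of_facet lt bs \<longleftrightarrow> (\<exists>xs. maximal_chain xs \<and> min_labeling lt xs = bs)"

end

theory Submission
  imports Defs
begin

(* Let x, m, z be consecutive elements of the chain, with labels b = \<lambda>(x, m) < c = \<lambda>(m, z),
   and replace m by y = x \<squnion> c.  Semimodularity makes y cover x, and comparing ranks y is covered
   by z.  Two distinct covers of x below z join to z, so an atom a < c with x \<squnion> a = y would
   satisfy m \<squnion> a = z, against the minimality of c: hence \<lambda>(x, y) = c.  An atom a < b with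
   y \<squnion> a = z either labels the cover x < m, against the minimality of b, or again satisfies
   m \<squnion> a = z with a < c: hence \<lambda>(y, z) = b. *)

lemma rank_function_strict_mono:
  fixes \<rho> :: "'a::{finite,bounded_lattice} \<Rightarrow> nat"
  assumes rank: "rank_function \<rho>" and "x < y"
  shows "\<rho> x < \<rho> y"
  using \<open>x < y\<close>
proof (induction "card {w. x < w \<and> w < y}" arbitrary: x y rule: less_induct)
  case less
  show ?case
  proof (cases "covers x y")
    case True
    then show ?thesis using rank by (simp add: rank_function_def)
  next
    case False
    then obtain w where w: "x < w" "w < y" using less.prems by (auto simp: covers_def)
    have "card {v. x < v \<and> v < w} < card {v. x < v \<and> v < y}"
      by (rule psubset_card_mono) (use w in auto)
    moreover have "card {v. w < v \<and> v < y} < card {v. x < v \<and> v < y}"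
      by (rule psubset_card_mono) (use w in auto)
    ultimately show ?thesis using less.hyps w by (meson order.strict_trans)
  qed
qed

lemma covers_if_rank_Suc:
  fixes \<rho> :: "'a::{finite,bounded_lattice} \<Rightarrow> nat"
  assumes rank: "rank_function \<rho>" and "x < y" and "\<rho> y = Suc (\<rho> x)"
  shows "covers x y"
proof -
  have "\<not> (x < w \<and> w < y)" for w
    using rank_function_strict_mono[OF rank, of x w] rank_function_strict_mono[OF rank, of w y]
      \<open>\<rho> y = Suc (\<rho> x)\<close> by auto
  then show ?thesis using \<open>x < y\<close> by (auto simp: covers_def)
qed

lemma covers_sup_atom:
  fixes \<rho> :: "'a::{finite,bounded_lattice} \<Rightarrow> nat" and a x :: 'a
  assumes rank: "rank_function \<rho>"
    and semimodular: "\<forall>x y. \<rho> (sup x y) + \<rho> (inf x y) \<le> \<rho> x + \<rho> y"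
    and "atom a" and "\<not> a \<le> x"
  shows "covers x (sup x a)"
proof (rule covers_if_rank_Suc[OF rank])
  show less: "x < sup x a"
    using \<open>\<not> a \<le> x\<close> by (simp add: less_le_not_le)
  have "inf x a < a"
    using \<open>\<not> a \<le> x\<close> by (simp add: less_le_not_le)
  then have "inf x a = bot"
    using \<open>atom a\<close> bot.not_eq_extremum unfolding atom_def covers_def by blast
  moreover have "\<rho> a = 1"
    using rank \<open>atom a\<close> by (simp add: rank_function_def atom_def)
  ultimately have "\<rho> (sup x a) \<le> Suc (\<rho> x)"
    using semimodular[rule_format, of x a] rank by (simp add: rank_function_def)
  then show "\<rho> (sup x a) = Suc (\<rho> x)"
    using rank_function_strict_mono[OF rank less] by simp
qed

lemma covers_ex_atom:
  fixes u v :: "'a::{finite,bounded_lattice}"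
  assumes "atomic_lattice TYPE('a)" and "covers u v"
  shows "\<exists>a. atom a \<and> sup u a = v"
proof -
  obtain S where atoms: "S \<subseteq> {a. atom a}" and join: "is_join_of S v"
    using assms(1) unfolding atomic_lattice_def by blast
  have "u < v" using assms(2) by (simp add: covers_def)
  then obtain a where "a \<in> S" and "\<not> a \<le> u"
    using join unfolding is_join_of_def by (meson leD)
  have "u < sup u a"
    using \<open>\<not> a \<le> u\<close> by (simp add: less_le_not_le)
  moreover have "sup u a \<le> v"
    using join \<open>a \<in> S\<close> \<open>u < v\<close> unfolding is_join_of_def by simp
  ultimately have "sup u a = v"
    using assms(2) unfolding covers_def by (metis order.not_eq_order_implies_strict)
  then show ?thesis using \<open>a \<in> S\<close> atoms by blast
qed

lemma sup_eq_if_distinct_covers: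
  fixes x :: "'a::lattice"
  assumes "covers x m" and "covers m z" and "covers x w" and "w \<noteq> m" and "w \<le> z"
  shows "sup m w = z"
proof -
  have "\<not> w \<le> m"
    using assms(1,3,4) unfolding covers_def by (metis order.not_eq_order_implies_strict)
  then have "m < sup m w"
    by (simp add: less_le_not_le)
  moreover have "sup m w \<le> z" using assms(2,5) by (simp add: covers_def less_imp_le)
  ultimately show ?thesis
    using assms(2) unfolding covers_def by (metis order.not_eq_order_implies_strict)
qed

lemma
  assumes "linear_order_on_atoms lt"
  shows linear_order_on_atoms_trans:
      "atom a \<Longrightarrow> atom b \<Longrightarrow> atom c \<Longrightarrow> lt a b \<Longrightarrow> lt b c \<Longrightarrow> lt a c"
    and linear_order_on_atoms_total: "atom a \<Longrightarrow> atom b \<Longrightarrow> a \<noteq> b \<Longrightarrow> lt a b \<or> lt b a"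
    and linear_order_on_atoms_asym: "atom a \<Longrightarrow> atom b \<Longrightarrow> lt a b \<Longrightarrow> \<not> lt b a"
  using assms unfolding linear_order_on_atoms_def by blast+

lemma finite_atoms_ex_least:
  assumes order: "linear_order_on_atoms lt"
    and "finite A" and "A \<noteq> {}" and "\<forall>a\<in>A. atom a"
  shows "\<exists>a\<in>A. \<forall>b\<in>A. b \<noteq> a \<longrightarrow> lt a b"
  using assms(2-4)
proof (induction A rule: finite_ne_induct)
  case (singleton a)
  then show ?case by simp
next
  case (insert a A)
  then obtain c where "c \<in> A" and least: "\<forall>b\<in>A. b \<noteq> c \<longrightarrow> lt c b" by auto
  moreover have "a \<noteq> c" and "atom a" and "atom c"
    using insert \<open>c \<in> A\<close> by auto
  ultimately consider "lt c a" | "lt a c"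
    using linear_order_on_atoms_total[OF order, of a c] by blast
  then show ?case
  proof cases
    case 1
    then show ?thesis using \<open>c \<in> A\<close> least by (intro bexI[of _ c]) auto
  next
    case 2
    have "lt a b" if "b \<in> A" for b
    proof (cases "b = c")
      case False
      then have "lt c b" using least that by blast
      moreover have "atom b" using insert.prems that by simp
      ultimately show ?thesis
        using 2 linear_order_on_atoms_trans[OF order] \<open>atom a\<close> \<open>atom c\<close> by blast
    qed (use 2 in simp)
    then show ?thesis by (intro bexI[of _ a]) auto
  qed
qed

definition is_min_label :: "('a::bounded_lattice \<Rightarrow> 'a \<Rightarrow> bool) \<Rightarrow> 'a \<Rightarrow> 'a \<Rightarrow> 'a \<Rightarrow> bool" where
  "is_min_label lt x y a \<longleftrightarrow> atom a \<and> sup x a = y \<and>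
     (\<forall>b. atom b \<and> sup x b = y \<and> b \<noteq> a \<longrightarrow> lt a b)"

lemma min_label_eqI:
  assumes order: "linear_order_on_atoms lt" and "is_min_label lt x y a"
  shows "min_label lt x y = a"
  unfolding min_label_def
proof (rule the_equality)
  show "atom a \<and> sup x a = y \<and> (\<forall>b. atom b \<and> sup x b = y \<and> b \<noteq> a \<longrightarrow> lt a b)"
    using \<open>is_min_label lt x y a\<close> by (simp add: is_min_label_def)
next
  fix a' assume a': "atom a' \<and> sup x a' = y \<and> (\<forall>b. atom b \<and> sup x b = y \<and> b \<noteq> a' \<longrightarrow> lt a' b)"
  have a: "atom a" "sup x a = y" "\<forall>b. atom b \<and> sup x b = y \<and> b \<noteq> a \<longrightarrow> lt a b"
    using \<open>is_min_label lt x y a\<close> unfolding is_min_label_def by auto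
  show "a' = a"
  proof (rule ccontr)
    assume "a' \<noteq> a"
    then have "lt a a'" and "lt a' a" using a a' by auto
    then show False using linear_order_on_atoms_asym[OF order] a a' by blast
  qed
qed

lemma is_min_label_min_label:
  fixes x y :: "'a::{finite,bounded_lattice}"
  assumes order: "linear_order_on_atoms lt" and "atomic_lattice TYPE('a)" and "covers x y"
  shows "is_min_label lt x y (min_label lt x y)"
proof -
  let ?A = "{a. atom a \<and> sup x a = y}"
  have "?A \<noteq> {}" using covers_ex_atom[OF assms(2,3)] by blast
  then have "\<exists>a\<in>?A. \<forall>b\<in>?A. b \<noteq> a \<longrightarrow> lt a b"
    by (intro finite_atoms_ex_least[OF order]) auto
  then obtain a where "a \<in> ?A" and "\<forall>b\<in>?A. b \<noteq> a \<longrightarrow> lt a b" by blast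
  then have "is_min_label lt x y a" by (simp add: is_min_label_def)
  then show ?thesis using min_label_eqI[OF order] by simp
qed

context
  fixes \<rho> :: "'a::{finite,bounded_lattice} \<Rightarrow> nat" and lt :: "'a \<Rightarrow> 'a \<Rightarrow> bool"
    and x m z b c :: 'a
  assumes rank: "rank_function \<rho>"
    and semimodular: "\<forall>x y. \<rho> (sup x y) + \<rho> (inf x y) \<le> \<rho> x + \<rho> y"
    and order: "linear_order_on_atoms lt"
    and lower: "covers x m" and upper: "covers m z"
    and b: "is_min_label lt x m b" and c: "is_min_label lt m z c"
    and "lt b c"
begin

private lemma min_labels:
  "atom b" "sup x b = m" "\<And>a. atom a \<Longrightarrow> sup x a = m \<Longrightarrow> a \<noteq> b \<Longrightarrow> lt b a"
  "atom c" "sup m c = z" "\<And>a. atom a \<Longrightarrow> sup m a = z \<Longrightarrow> a \<noteq> c \<Longrightarrow> lt c a"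
  using b c unfolding is_min_label_def by auto

private lemma chain_le: "x \<le> m" "m \<le> z" "x < m" "m < z"
  using lower upper by (auto simp: covers_def less_imp_le)

private lemma exchange_le_top: "sup x c \<le> z"
  using chain_le min_labels(5) by (metis le_supI sup.cobounded2 order.trans)

private lemma upper_label_not_le_middle: "\<not> c \<le> m"
  using min_labels(5) chain_le(4) by (metis sup.absorb1 order.irrefl)

private lemma sup_middle_atom:
  assumes "atom a" and "\<not> a \<le> x" and "sup x a \<noteq> m" and "a \<le> z"
  shows "sup m a = z"
proof -
  have "covers x (sup x a)" by (rule covers_sup_atom[OF rank semimodular assms(1,2)])
  moreover have "sup x a \<le> z" using chain_le \<open>a \<le> z\<close> by simp
  ultimately have "sup m (sup x a) = z"
    using sup_eq_if_distinct_covers[OF lower upper] \<open>sup x a \<noteq> m\<close> by blast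
  moreover have "sup m (sup x a) = sup m a"
    using chain_le(1) by (simp add: sup.absorb1 flip: sup_assoc)
  ultimately show ?thesis by simp
qed

lemma exchange_covers_lower: "covers x (sup x c)"
  using covers_sup_atom[OF rank semimodular min_labels(4)] upper_label_not_le_middle chain_le(1)
  by (meson order.trans)

lemma exchange_covers_upper: "covers (sup x c) z"
proof (rule covers_if_rank_Suc[OF rank])
  have ranks: "\<rho> (sup x c) = Suc (\<rho> x)" "\<rho> z = Suc (Suc (\<rho> x))"
    using exchange_covers_lower lower upper rank by (auto simp: rank_function_def)
  then show "\<rho> z = Suc (\<rho> (sup x c))" by simp
  show "sup x c < z" using exchange_le_top ranks by (auto simp: le_less)
qed

lemma exchange_min_label_lower: "is_min_label lt x (sup x c) c"
  unfolding is_min_label_def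
proof (intro conjI allI impI)
  fix a assume a: "atom a \<and> sup x a = sup x c \<and> a \<noteq> c"
  show "lt c a"
  proof (rule ccontr)
    assume "\<not> lt c a"
    then have "lt a c" using linear_order_on_atoms_total[OF order] a min_labels(4) by blast
    have "x < sup x a" using exchange_covers_lower a by (simp add: covers_def)
    then have "\<not> a \<le> x" by (auto simp: sup.absorb1)
    moreover have "sup x a \<noteq> m" using a upper_label_not_le_middle by (metis sup.cobounded2)
    moreover have "a \<le> z" using a exchange_le_top by (metis sup.cobounded2 order.trans)
    ultimately have "sup m a = z" using sup_middle_atom a by blast
    then have "lt c a" using min_labels(6) a by blast
    then show False using linear_order_on_atoms_asym[OF order] \<open>lt a c\<close> a min_labels(4) by blast
  qed
qed (use min_labels(4) in simp_all)

lemma exchange_min_label_upper: "is_min_label lt (sup x c) z b"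
  unfolding is_min_label_def
proof (intro conjI allI impI)
  show "sup (sup x c) b = z"
    using min_labels(2,5) by (metis sup_assoc sup_commute)
  fix a assume a: "atom a \<and> sup (sup x c) a = z \<and> a \<noteq> b"
  show "lt b a"
  proof (rule ccontr)
    assume "\<not> lt b a"
    then have "lt a b" using linear_order_on_atoms_total[OF order] a min_labels(1) by blast
    then have "lt a c"
      using linear_order_on_atoms_trans[OF order] \<open>lt b c\<close> a min_labels(1,4) by blast
    have "a \<le> z" using a by (metis sup.cobounded2)
    have "\<not> a \<le> x"
    proof
      assume "a \<le> x"
      then have "sup (sup x c) a = sup x c" by (simp add: sup.absorb1 le_supI1)
      then show False using a exchange_covers_upper by (simp add: covers_def)
    qed
    show False
    proof (cases "sup x a = m")
      case True
      then have "lt b a" using min_labels(3) a by blast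
      then show False using linear_order_on_atoms_asym[OF order] \<open>lt a b\<close> a min_labels(1) by blast
    next
      case False
      then have "sup m a = z" using sup_middle_atom a \<open>\<not> a \<le> x\<close> \<open>a \<le> z\<close> by blast
      moreover have "a \<noteq> c"
        using linear_order_on_atoms_asym[OF order] \<open>lt a b\<close> \<open>lt b c\<close> min_labels(1,4) by blast
      ultimately have "lt c a" using min_labels(6) a by blast
      then show False using linear_order_on_atoms_asym[OF order] \<open>lt a c\<close> a min_labels(4) by blast
    qed
  qed
qed (use min_labels(1) in simp)

lemmas exchange = exchange_covers_lower exchange_covers_upper
  exchange_min_label_lower exchange_min_label_upper

end

lemma length_min_labeling: "length (min_labeling lt xs) = length xs - 1"
  by (simp add: min_labeling_def)

lemma nth_min_labeling:
  "j < length xs - 1 \<Longrightarrow> min_labeling lt xs ! j = min_label lt (xs ! j) (xs ! Suc j)"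
  by (simp add: min_labeling_def)

lemma min_labeling_list_update:
  assumes "Suc (Suc k) < length xs"
  shows "min_labeling lt (xs[Suc k := y]) =
    (min_labeling lt xs)[k := min_label lt (xs ! k) y, Suc k := min_label lt y (xs ! Suc (Suc k))]"
  by (rule nth_equalityI) (use assms in \<open>auto simp: length_min_labeling nth_min_labeling nth_list_update\<close>)

lemma maximal_chain_list_update:
  assumes chain: "maximal_chain xs" and "Suc (Suc k) < length xs"
    and "covers (xs ! k) y" and "covers y (xs ! Suc (Suc k))"
  shows "maximal_chain (xs[Suc k := y])"
  unfolding maximal_chain_def
proof (intro conjI allI impI)
  show "xs[Suc k := y] \<noteq> []" and "hd (xs[Suc k := y]) = bot" and "last (xs[Suc k := y]) = top"
    using chain assms(2) by (auto simp: maximal_chain_def hd_conv_nth last_list_update)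
  fix j assume "Suc j < length (xs[Suc k := y])"
  then show "covers (xs[Suc k := y] ! j) (xs[Suc k := y] ! Suc j)"
    using chain assms(2-4) by (auto simp: maximal_chain_def nth_list_update)
qed

theorem lemma4p3:
  fixes lt :: "'a::{finite,bounded_lattice} \<Rightarrow> 'a \<Rightarrow> bool"
    and bs :: "'a list" and r i :: nat
  assumes "geometric_lattice TYPE('a)"
    and "linear_order_on_atoms lt"
    and "\<And>xs::'a list. maximal_chain xs \<Longrightarrow> length xs = r + 2"
    and "is_min_labeling_of_facet lt bs"
    and "1 \<le> i" and "i \<le> r"
    and "lt (bs ! (i - 1)) (bs ! i)"
  shows "is_min_labeling_of_facet lt (bs[i - 1 := bs ! i, i := bs ! (i - 1)])"
proof -
  obtain \<rho> :: "'a \<Rightarrow> nat" where rank: "rank_function \<rho>"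
    and semimodular: "\<forall>x y. \<rho> (sup x y) + \<rho> (inf x y) \<le> \<rho> x + \<rho> y"
    and atomic: "atomic_lattice TYPE('a)"
    using assms(1) unfolding geometric_lattice_def by blast
  obtain xs where chain: "maximal_chain xs" and bs: "bs = min_labeling lt xs"
    using assms(4) unfolding is_min_labeling_of_facet_def by blast
  obtain k where k: "i = Suc k" using assms(5) by (cases i) auto
  have len: "Suc (Suc k) < length xs" using assms(3)[OF chain] assms(6) k by simp
  define x m z where "x = xs ! k" and "m = xs ! Suc k" and "z = xs ! Suc (Suc k)"
  have lower: "covers x m" and upper: "covers m z"
    using chain len unfolding maximal_chain_def x_def m_def z_def by simp_all
  define b c where "b = min_label lt x m" and "c = min_label lt m z"
  have labels: "bs ! (i - 1) = b" "bs ! i = c"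
    using len k by (simp_all add: bs b_def c_def x_def m_def z_def nth_min_labeling)
  note exchange = exchange[OF rank semimodular assms(2) lower upper
      is_min_label_min_label[OF assms(2) atomic lower, folded b_def]
      is_min_label_min_label[OF assms(2) atomic upper, folded c_def]
      assms(7)[unfolded labels]]
  have "maximal_chain (xs[Suc k := sup x c])"
    using maximal_chain_list_update[OF chain len] exchange by (simp add: x_def z_def)
  moreover have "min_labeling lt (xs[Suc k := sup x c]) = bs[i - 1 := c, i := b]"
    using min_labeling_list_update[OF len] min_label_eqI[OF assms(2)] exchange k
    by (simp add: bs x_def z_def)
  ultimately show ?thesis
    unfolding is_min_labeling_of_facet_def labels by blast
qed

end
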